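(* Let $n\ge2$ and $K\in\mathcal{C}_e^n$. Then $$K=\bigcap_{u\in S^{n-1}}C^{-}(u,c_K(u)).$$ Moreover, for every $x\in\partial K$ there exists $u_0\in S^{n-1}$ with $[x,u_0]=c_K(u_0)$.
   Context: For $x,y\in\mathbb{R}^n$ let $[x,y]=\sqrt{|x|^2|y|^2-(x\cdot y)^2}$. For $u\in S^{n-1}$, $r>0$, $C^{-}(u,r)=\{x\in\mathbb{R}^n:[x,u]\le r\}$ is a closed solid cylinder. $\mathcal{C}_e^n$ is the class of origin-symmetric convex bodies in $\mathbb{R}^n$ that are intersections of closed solid cylinders. For $K\in\mathcal{C}_e^n$, the cylindrical support function is $c_K(x)=\max_{y\in K}[x,y]$, $x\in\mathbb{R}^n$. $\partial K$ denotes the boundary of $K$. *)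

theory Defs
  imports "HOL-Analysis.Analysis"
begin

definition brk :: "'a::euclidean_space \<Rightarrow> 'a \<Rightarrow> real" where
  "brk x y = sqrt ((norm x)^2 * (norm y)^2 - (x \<bullet> y)^2)"

definition cyl :: "'a::euclidean_space \<Rightarrow> real \<Rightarrow> 'a set" where
  "cyl u r = {x. brk x u \<le> r}"

definition convex_body :: "'a::euclidean_space set \<Rightarrow> bool" where
  "convex_body K \<longleftrightarrow> compact K \<and> convex K \<and> interior K \<noteq> {}"

definition origin_symmetric :: "'a::euclidean_space set \<Rightarrow> bool" where
  "origin_symmetric K \<longleftrightarrow> (\<forall>x\<in>K. - x \<in> K)"

definition cyl_class :: "'a::euclidean_space set \<Rightarrow> bool" where
  "cyl_class K \<longleftrightarrow> convex_body K \<and> origin_symmetric K \<and>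
     (\<exists>F. F \<subseteq> sphere 0 1 \<times> {0<..} \<and> K = (\<Inter>(u,r)\<in>F. cyl u r))"

definition cyl_supp :: "'a::euclidean_space set \<Rightarrow> 'a \<Rightarrow> real" where
  "cyl_supp K x = Sup ((\<lambda>y. brk x y) ` K)"

end

theory Submission
  imports Defs
begin

(* The inclusion of K in the intersection is immediate, and conversely each cylinder C(u,r) of a
   representation of K contains the cylinder C(u, c_K u), because c_K u <= r.  At a boundary point x
   choose points z_k outside K converging to x; each z_k is cut off by some C(u_k, c_K u_k), and for a
   limit direction u_0 of the u_k we get [y,u_0] <= [x,u_0] for all y in K, i.e. c_K u_0 <= [x,u_0]. *)

lemma brk_commute: "brk x y = brk y x"
  unfolding brk_def by (simp add: inner_commute mult.commute)

lemma brk_le_norm_mult: "brk x y \<le> norm x * norm y"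
proof -
  have "(norm x)^2 * (norm y)^2 - (x \<bullet> y)^2 \<le> (norm x * norm y)^2"
    by (simp add: power_mult_distrib)
  hence "brk x y \<le> sqrt ((norm x * norm y)^2)"
    unfolding brk_def using real_sqrt_le_mono by blast
  thus ?thesis by simp
qed

lemma tendsto_brk:
  assumes "(f \<longlongrightarrow> a) F" "(g \<longlongrightarrow> b) F"
  shows "((\<lambda>k. brk (f k) (g k)) \<longlongrightarrow> brk a b) F"
  unfolding brk_def by (intro tendsto_intros assms)

lemma bdd_above_brk_image:
  assumes "bounded K"
  shows "bdd_above ((\<lambda>y. brk x y) ` K)"
proof -
  obtain B where B: "\<And>y. y \<in> K \<Longrightarrow> norm y \<le> B"
    using assms bounded_iff by blast
  show ?thesis
  proof (rule bdd_aboveI2)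
    fix y assume "y \<in> K"
    have "brk x y \<le> norm x * norm y" by (rule brk_le_norm_mult)
    also have "\<dots> \<le> norm x * B" using B[OF \<open>y \<in> K\<close>] by (simp add: mult_left_mono)
    finally show "brk x y \<le> norm x * B" .
  qed
qed

lemma brk_le_cyl_supp:
  assumes "bounded K" "y \<in> K"
  shows "brk y u \<le> cyl_supp K u"
  unfolding cyl_supp_def brk_commute[of y]
  using cSup_upper[OF imageI[OF assms(2)] bdd_above_brk_image[OF assms(1)]] .

lemma subset_cyl_cyl_supp: "bounded K \<Longrightarrow> K \<subseteq> cyl u (cyl_supp K u)"
  using brk_le_cyl_supp by (auto simp: cyl_def)

lemma cyl_supp_le:
  assumes "K \<noteq> {}" "K \<subseteq> cyl u r"
  shows "cyl_supp K u \<le> r"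
  unfolding cyl_supp_def using assms by (intro cSup_least) (auto simp: cyl_def brk_commute)

lemma cyl_subset_cyl: "r \<le> s \<Longrightarrow> cyl u r \<subseteq> cyl u s"
  by (auto simp: cyl_def)

lemma Inter_cyl_cyl_supp:
  assumes "bounded K" "K \<noteq> {}" "fst ` F \<subseteq> S" and K_eq: "K = (\<Inter>(u, r)\<in>F. cyl u r)"
  shows "K = (\<Inter>u\<in>S. cyl u (cyl_supp K u))"
proof
  show "K \<subseteq> (\<Inter>u\<in>S. cyl u (cyl_supp K u))"
    by (intro INT_greatest subset_cyl_cyl_supp assms(1))
next
  have "(\<Inter>u\<in>S. cyl u (cyl_supp K u)) \<subseteq> cyl u r" if "(u, r) \<in> F" for u r
  proof -
    have "K \<subseteq> cyl u r" unfolding K_eq using that by blast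
    have "u \<in> S" using assms(3) that by force
    hence "(\<Inter>u\<in>S. cyl u (cyl_supp K u)) \<subseteq> cyl u (cyl_supp K u)"
      by (rule INT_lower)
    also have "\<dots> \<subseteq> cyl u r"
      using \<open>K \<subseteq> cyl u r\<close> by (intro cyl_subset_cyl cyl_supp_le assms(2))
    finally show ?thesis .
  qed
  hence "(\<Inter>u\<in>S. cyl u (cyl_supp K u)) \<subseteq> (\<Inter>(u, r)\<in>F. cyl u r)"
    by (auto intro!: INT_greatest)
  thus "(\<Inter>u\<in>S. cyl u (cyl_supp K u)) \<subseteq> K"
    using K_eq by simp
qed

lemma frontier_cyl_supp_attained:
  assumes "bounded K" "closed K" and K_eq: "K = (\<Inter>u\<in>sphere 0 1. cyl u (cyl_supp K u))"
    and "x \<in> frontier K"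
  shows "\<exists>u\<in>sphere 0 1. brk x u = cyl_supp K u"
proof -
  have "x \<in> K" using assms(2,4) frontier_subset_closed by blast
  have "x \<in> closure (- K)" using assms(4) by (simp add: frontier_closures)
  then obtain z where z_out: "\<And>k. z k \<notin> K" and z_lim: "z \<longlonglongrightarrow> x"
    unfolding closure_sequential by auto
  have "\<exists>u\<in>sphere 0 1. \<not> brk (z k) u \<le> cyl_supp K u" for k
    using z_out[of k] K_eq unfolding cyl_def by blast
  then obtain u where u_sphere: "\<And>k. u k \<in> sphere 0 1"
    and u_cut: "\<And>k. \<not> brk (z k) (u k) \<le> cyl_supp K (u k)"
    by metis
  obtain l s where l: "l \<in> sphere 0 1" and s: "strict_mono s" and u_lim: "(u \<circ> s) \<longlonglongrightarrow> l"
    using seq_compactE[OF compact_imp_seq_compact[OF compact_sphere]] u_sphere by metis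
  have "brk y l \<le> brk x l" if "y \<in> K" for y
  proof (rule LIMSEQ_le)
    show "(\<lambda>k. brk y ((u \<circ> s) k)) \<longlonglongrightarrow> brk y l"
      using u_lim by (intro tendsto_brk tendsto_const)
    show "(\<lambda>k. brk ((z \<circ> s) k) ((u \<circ> s) k)) \<longlonglongrightarrow> brk x l"
      using LIMSEQ_subseq_LIMSEQ[OF z_lim s] u_lim by (rule tendsto_brk)
    have "brk y (u k) \<le> brk (z k) (u k)" for k
      using brk_le_cyl_supp[OF assms(1) that, of "u k"] u_cut[of k] by linarith
    thus "\<exists>N. \<forall>k\<ge>N. brk y ((u \<circ> s) k) \<le> brk ((z \<circ> s) k) ((u \<circ> s) k)"
      by simp
  qed
  hence "cyl_supp K l \<le> brk x l"
    using \<open>x \<in> K\<close> by (intro cyl_supp_le) (auto simp: cyl_def)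
  moreover have "brk x l \<le> cyl_supp K l"
    using assms(1) \<open>x \<in> K\<close> by (rule brk_le_cyl_supp)
  ultimately show ?thesis using l by force
qed

theorem proposition3p7:
  fixes K :: "'a::euclidean_space set"
  assumes "DIM('a) \<ge> 2" and "cyl_class K"
  shows "K = (\<Inter>u\<in>sphere 0 1. cyl u (cyl_supp K u)) \<and>
         (\<forall>x\<in>frontier K. \<exists>u0\<in>sphere 0 1. brk x u0 = cyl_supp K u0)"
proof -
  from assms(2) obtain F where F_dirs: "F \<subseteq> sphere 0 1 \<times> {0<..}"
    and K_eq: "K = (\<Inter>(u, r)\<in>F. cyl u r)" and "compact K" and "interior K \<noteq> {}"
    unfolding cyl_class_def convex_body_def by blast
  have "bounded K" using \<open>compact K\<close> by (rule compact_imp_bounded)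
  have "closed K" using \<open>compact K\<close> by (rule compact_imp_closed)
  have "K \<noteq> {}" using \<open>interior K \<noteq> {}\<close> interior_subset by blast
  have "fst ` F \<subseteq> sphere 0 1" using F_dirs by auto
  with \<open>bounded K\<close> \<open>K \<noteq> {}\<close> have K_rep: "K = (\<Inter>u\<in>sphere 0 1. cyl u (cyl_supp K u))"
    using K_eq by (rule Inter_cyl_cyl_supp)
  moreover have "\<forall>x\<in>frontier K. \<exists>u0\<in>sphere 0 1. brk x u0 = cyl_supp K u0"
    using frontier_cyl_supp_attained[OF \<open>bounded K\<close> \<open>closed K\<close> K_rep] by blast
  ultimately show ?thesis ..
qed

end
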